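(* Let $A\in\mathbb{R}^{m\times m}$ be positive definite, $B\in\mathbb{R}^{m\times n}$ ($n\le m$), $\alpha\ge0$, $\beta>0$, and let $(\lambda,(u^*,v^* )^* )$ be an eigenpair of $\mathcal{P}_{MGSSP}^{-1}\mathcal{A}$ with $u\in\mathbb{C}^m$, $v\in\mathbb{C}^n$. (i) If $B$ has full column rank and $B^Tu=0$, then $$\frac{\lambda_{\min}(H)(\alpha+2\lambda_{\min}(H))}{(\alpha+2\rho(H))^2+4\rho(S)^2}\le \operatorname{Re}(\lambda)\le\frac{\rho(H)(\alpha+2\rho(H))+2\rho(S)^2}{(\alpha+2\lambda_{\min}(H))^2},\qquad |\operatorname{Im}(\lambda)|\le\frac{\alpha\rho(S)}{(\alpha+2\lambda_{\min}(H))^2}.\quad(\ast)$$ (ii) If $B$ is rank deficient and $u=0$, then $\lambda=0$. (iii) If $B$ is rank deficient and $B^Tu=0$, then either $\lambda=0$ or $\lambda$ satisfies the inequalities $(\ast)$.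
   Context: A real square matrix $A$ is called positive definite if $x^TAx>0$ for all nonzero $x\in\mathbb{R}^m$ ($A$ need not be symmetric). $H=\frac12(A+A^T)$, $S=\frac12(A-A^T)$. $\mathcal{A}=\begin{pmatrix}A & B\\ -B^T & 0\end{pmatrix}$ and, for $\alpha\ge0,\beta>0$, $\mathcal{P}_{MGSSP}=\begin{pmatrix}\alpha I+2A & 2B\\ -2B^T & \beta I\end{pmatrix}$. $\lambda_{\min}(\cdot)$ is the smallest eigenvalue of a symmetric matrix and $\rho(\cdot)$ the spectral radius. *)

theory Defs
  imports "Jordan_Normal_Form.Spectral_Radius" "Jordan_Normal_Form.Gauss_Jordan_Elimination"
    "Jordan_Normal_Form.DL_Rank"
begin

text \<open>Positive definite in the (not necessarily symmetric) sense: x^T A x > 0 for all nonzero real x.\<close>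
definition pos_def_real :: "nat \<Rightarrow> real mat \<Rightarrow> bool" where
  "pos_def_real m A \<longleftrightarrow> A \<in> carrier_mat m m \<and>
     (\<forall>x \<in> carrier_vec m. x \<noteq> 0\<^sub>v m \<longrightarrow> x \<bullet> (A *\<^sub>v x) > 0)"

definition sym_part :: "real mat \<Rightarrow> real mat" where
  "sym_part A = (1/2) \<cdot>\<^sub>m (A + transpose_mat A)"

definition skew_part :: "real mat \<Rightarrow> real mat" where
  "skew_part A = (1/2) \<cdot>\<^sub>m (A - transpose_mat A)"

definition lambda_min :: "real mat \<Rightarrow> real" where
  "lambda_min H = Min {k. eigenvalue H k}"

definition rho :: "real mat \<Rightarrow> real" where
  "rho M = spectral_radius (map_mat complex_of_real M)"

definition saddle_mat :: "real mat \<Rightarrow> real mat \<Rightarrow> real mat" where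
  "saddle_mat A B = four_block_mat A B (- transpose_mat B) (0\<^sub>m (dim_col B) (dim_col B))"

definition P_MGSSP :: "real \<Rightarrow> real \<Rightarrow> real mat \<Rightarrow> real mat \<Rightarrow> real mat" where
  "P_MGSSP \<alpha> \<beta> A B = four_block_mat (\<alpha> \<cdot>\<^sub>m 1\<^sub>m (dim_row A) + 2 \<cdot>\<^sub>m A) (2 \<cdot>\<^sub>m B)
      (- (2 \<cdot>\<^sub>m transpose_mat B)) (\<beta> \<cdot>\<^sub>m 1\<^sub>m (dim_col B))"

definition eig_bounds :: "real mat \<Rightarrow> real \<Rightarrow> complex \<Rightarrow> bool" where
  "eig_bounds A \<alpha> lam \<longleftrightarrow>
     (let H = sym_part A; S = skew_part A; lm = lambda_min H; rH = rho H; rS = rho S in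
       lm * (\<alpha> + 2 * lm) / ((\<alpha> + 2 * rH)^2 + 4 * rS^2) \<le> Re lam \<and>
       Re lam \<le> (rH * (\<alpha> + 2 * rH) + 2 * rS^2) / (\<alpha> + 2 * lm)^2 \<and>
       \<bar>Im lam\<bar> \<le> \<alpha> * rS / (\<alpha> + 2 * lm)^2)"

end

theory Submission
  imports Defs "HOL-Analysis.Function_Topology" "HOL-Analysis.Convex"
begin

text \<open>Write the eigenvalue problem as \<open>\<A> x = \<lambda> \<P> x\<close> with \<open>x = (u, v)\<close>; \<open>\<P>\<close> is invertible since its
  symmetric part \<open>diag(\<alpha>I + 2H, \<beta>I)\<close> is positive definite. The second block row reads
  \<open>-B\<^sup>Tu = \<lambda>(-2B\<^sup>Tu + \<beta>v)\<close>, so \<open>u = 0\<close> forces \<open>\<lambda> = 0\<close>, while \<open>B\<^sup>Tu = 0\<close> and \<open>\<lambda> \<noteq> 0\<close> force \<open>v = 0\<close>.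
  Then \<open>Au = \<lambda>(\<alpha>u + 2Au)\<close>, and writing \<open>u\<^sup>*Au/|u|\<^sup>2 = a + \<i> b\<close> gives \<open>\<lambda> = (a + \<i> b)/(\<alpha> + 2a + 2\<i> b)\<close>.
  The bounds follow from \<open>\<lambda>\<^sub>m\<^sub>i\<^sub>n(H) \<le> a \<le> \<rho>(H)\<close> (Rayleigh quotients of the symmetric part) and
  \<open>|b| \<le> \<rho>(S)\<close> (the skew part is normal, so its spectral norm is \<open>\<rho>(S)\<close>). Under full column rank
  \<open>\<lambda> = 0\<close> is impossible: it would give \<open>u\<^sup>*Au = 0\<close>, hence \<open>u = 0\<close>, \<open>Bv = 0\<close> and \<open>v = 0\<close>.\<close>

section \<open>Rayleigh quotients of real symmetric matrices\<close>

text \<open>Vectors are modelled as functions \<open>nat \<Rightarrow> real\<close> of which only the first \<open>m\<close> coordinates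
  matter, so that the unit sphere is compact in the product topology.\<close>

definition quad_form :: "nat \<Rightarrow> real mat \<Rightarrow> (nat \<Rightarrow> real) \<Rightarrow> real" where
  "quad_form m M x = (\<Sum>a<m. \<Sum>b<m. x a * M $$ (a,b) * x b)"

lemma continuous_quad_form: "continuous_on UNIV (quad_form m M)"
  unfolding quad_form_def
  by (intro continuous_intros continuous_on_product_then_coordinatewise continuous_on_id)

lemma unit_sphere_attains_min:
  fixes f :: "(nat \<Rightarrow> real) \<Rightarrow> real"
  assumes m: "m > 0" and f: "continuous_on UNIV f"
  shows "\<exists>z. (\<forall>i\<ge>m. z i = 0) \<and> (\<Sum>i<m. (z i)^2) = 1 \<and>
     (\<forall>y. (\<forall>i\<ge>m. y i = 0) \<and> (\<Sum>i<m. (y i)^2) = 1 \<longrightarrow> f z \<le> f y)"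
proof -
  define K where "K = {z::nat\<Rightarrow>real. (\<forall>i\<ge>m. z i = 0) \<and> (\<Sum>i<m. (z i)^2) = 1}"
  define S where "S = (\<lambda>i::nat. if i < m then {-1..1::real} else {0})"
  have "compactin (product_topology (\<lambda>_. euclideanreal) UNIV) (PiE UNIV S)"
    unfolding compactin_PiE by (auto simp: S_def)
  then have box: "compact (PiE UNIV S)"
    by (simp add: euclidean_product_topology)
  have sphere: "closed {z::nat\<Rightarrow>real. (\<Sum>i<m. (z i)^2) = 1}"
    by (intro closed_Collect_eq continuous_intros continuous_on_product_then_coordinatewise continuous_on_id)
  have "K = PiE UNIV S \<inter> {z. (\<Sum>i<m. (z i)^2) = 1}"
  proof (intro subset_antisym subsetI)
    fix z assume z: "z \<in> K"
    have "-1 \<le> z i \<and> z i \<le> 1" if "i < m" for i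
    proof -
      have "(z i)^2 \<le> (\<Sum>i<m. (z i)^2)"
        using that by (intro member_le_sum) auto
      then show ?thesis using z abs_square_le_1[of "z i"] by (simp add: K_def abs_le_iff)
    qed
    then have "z \<in> PiE UNIV S"
      using z by (auto simp: PiE_def S_def K_def)
    then show "z \<in> PiE UNIV S \<inter> {z. (\<Sum>i<m. (z i)^2) = 1}" using z by (auto simp: K_def)
  next
    fix z assume "z \<in> PiE UNIV S \<inter> {z. (\<Sum>i<m. (z i)^2) = 1}"
    then show "z \<in> K" by (auto simp: K_def PiE_def S_def Pi_def split: if_splits) (meson not_less)
  qed
  with box sphere have "compact K" by auto
  moreover have "K \<noteq> {}"
  proof -
    have "(\<Sum>i<m. (if i = 0 then 1 else 0::real)^2) = (\<Sum>i<m. if i = 0 then 1 else 0)"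
      by (rule sum.cong) auto
    with m have "(\<lambda>i. if i = 0 then 1 else 0::real) \<in> K"
      by (simp add: K_def)
    then show ?thesis by auto
  qed
  moreover have "continuous_on K f" using f continuous_on_subset by blast
  ultimately obtain z where "z \<in> K" "\<And>y. y \<in> K \<Longrightarrow> f z \<le> f y"
    using continuous_attains_inf by metis
  then show ?thesis unfolding K_def by blast
qed

lemma linear_plus_quadratic_nonneg_imp_zero:
  fixes a b :: real
  assumes "\<And>t. 0 \<le> a * t + b * t^2"
  shows "a = 0"
proof (rule ccontr)
  assume a: "a \<noteq> 0"
  define c where "c = \<bar>b\<bar> + 1"
  have c: "c > 0" "b \<le> c - 1" by (auto simp: c_def)
  define t where "t = - a / c"
  have "a * t + b * t^2 = (-(a^2)) / c + b * a^2 / c^2" by (simp add: t_def power2_eq_square)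
  also have "\<dots> \<le> (-(a^2)) / c + (c - 1) * a^2 / c^2"
    using c by (intro add_left_mono divide_right_mono mult_right_mono) auto
  also have "\<dots> = (-(a^2)) / c^2" using c by (simp add: field_simps power2_eq_square)
  also have "\<dots> < 0" using a c by simp
  finally show False using assms[of t] by simp
qed

lemma sum_unit_mult:
  fixes X :: "nat \<Rightarrow> 'a::comm_semiring_1"
  assumes "i < m"
  shows "(\<Sum>a<m. (if a = i then 1 else 0) * X a) = X i"
    "(\<Sum>a<m. X a * (if a = i then 1 else 0)) = X i"
proof -
  have "(\<Sum>a<m. (if a = i then 1 else 0) * X a) = (\<Sum>a<m. if a = i then X a else 0)"
    by (rule sum.cong) auto
  also have "\<dots> = X i" using assms by simp
  finally show "(\<Sum>a<m. (if a = i then 1 else 0) * X a) = X i" .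
  have "(\<Sum>a<m. X a * (if a = i then 1 else 0)) = (\<Sum>a<m. if a = i then X a else 0)"
    by (rule sum.cong) auto
  also have "\<dots> = X i" using assms by simp
  finally show "(\<Sum>a<m. X a * (if a = i then 1 else 0)) = X i" .
qed

lemma sym_mat_index:
  assumes "H \<in> carrier_mat m m" "transpose_mat H = H" "a < m" "b < m"
  shows "H $$ (a,b) = H $$ (b,a)"
  using assms by (metis carrier_matD index_transpose_mat(1))

lemma quad_form_add_unit:
  assumes i: "i < m" and H: "H \<in> carrier_mat m m" "transpose_mat H = H"
  shows "quad_form m H (\<lambda>a. z a + t * (if a = i then 1 else 0))
     = quad_form m H z + 2 * t * (\<Sum>b<m. H $$ (i,b) * z b) + t^2 * H $$ (i,i)"
proof -
  define d where "d = (\<lambda>a::nat. if a = i then 1 else 0::real)"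
  have "quad_form m H (\<lambda>a. z a + t * d a) =
    quad_form m H z + t * (\<Sum>a<m. \<Sum>b<m. d a * H $$ (a,b) * z b)
     + t * (\<Sum>a<m. \<Sum>b<m. z a * H $$ (a,b) * d b) + t^2 * (\<Sum>a<m. \<Sum>b<m. d a * H $$ (a,b) * d b)"
    unfolding quad_form_def by (simp add: algebra_simps sum.distrib sum_distrib_left power2_eq_square)
  also have "(\<Sum>a<m. \<Sum>b<m. d a * H $$ (a,b) * z b) = (\<Sum>b<m. H $$ (i,b) * z b)"
    using sum_unit_mult(1)[OF i, of "\<lambda>a. \<Sum>b<m. H $$ (a,b) * z b"]
    by (simp add: d_def sum_distrib_left mult.assoc)
  also have "(\<Sum>a<m. \<Sum>b<m. z a * H $$ (a,b) * d b) = (\<Sum>b<m. H $$ (i,b) * z b)"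
  proof -
    have "(\<Sum>a<m. \<Sum>b<m. z a * H $$ (a,b) * d b) = (\<Sum>a<m. z a * H $$ (a,i))"
      unfolding d_def by (simp add: mult.assoc sum_distrib_left[symmetric] sum_unit_mult(2)[OF i])
    also have "\<dots> = (\<Sum>b<m. H $$ (i,b) * z b)"
      using i H by (intro sum.cong) (auto simp: sym_mat_index)
    finally show ?thesis .
  qed
  also have "(\<Sum>a<m. \<Sum>b<m. d a * H $$ (a,b) * d b) = H $$ (i,i)"
    unfolding d_def by (simp add: mult.assoc sum_distrib_left[symmetric] sum_unit_mult[OF i])
  finally show ?thesis by (simp add: d_def)
qed

lemma sum_sq_add_unit:
  fixes z :: "nat \<Rightarrow> real"
  assumes "i < m"
  shows "(\<Sum>a<m. (z a + t * (if a = i then 1 else 0))^2) = (\<Sum>a<m. (z a)^2) + 2 * t * z i + t^2"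
proof -
  have "(\<Sum>a<m. (z a + t * (if a = i then 1 else 0))^2) =
     (\<Sum>a<m. (z a)^2 + (2 * t * (if a = i then z a else 0) + (if a = i then t^2 else 0)))"
    by (intro sum.cong) (auto simp: power2_eq_square algebra_simps)
  then show ?thesis
    using assms by (simp add: sum.distrib sum_distrib_left[symmetric])
qed

lemma quad_form_scale: "quad_form m M (\<lambda>a. y a / c) = quad_form m M y / c^2"
  unfolding quad_form_def by (simp add: sum_divide_distrib power2_eq_square algebra_simps)

text \<open>Courant--Fischer for the smallest eigenvalue: a minimiser of the quadratic form on the unit
  sphere exists by compactness, and the first-order condition along each coordinate direction makes it
  an eigenvector.\<close>

lemma sym_quad_form_min_eigenvector:
  assumes m: "m > 0" and H: "H \<in> carrier_mat m m" "transpose_mat H = H"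
  shows "\<exists>\<mu> z. (\<Sum>i<m. (z i)^2) = 1 \<and> (\<forall>i<m. (\<Sum>j<m. H $$ (i,j) * z j) = \<mu> * z i) \<and>
     (\<forall>y. \<mu> * (\<Sum>i<m. (y i)^2) \<le> quad_form m H y)"
proof -
  obtain z where z1: "(\<Sum>i<m. (z i)^2) = 1"
    and zmin: "\<And>y. (\<forall>i\<ge>m. y i = 0) \<Longrightarrow> (\<Sum>i<m. (y i)^2) = 1 \<Longrightarrow> quad_form m H z \<le> quad_form m H y"
    using unit_sphere_attains_min[OF m continuous_quad_form] by blast
  define \<mu> where "\<mu> = quad_form m H z"
  have bound: "\<mu> * (\<Sum>i<m. (y i)^2) \<le> quad_form m H y" for y
  proof (cases "\<forall>i<m. y i = 0")
    case True
    then show ?thesis by (simp add: quad_form_def)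
  next
    case False
    define s where "s = (\<Sum>i<m. (y i)^2)"
    from False obtain i where "i < m" "y i \<noteq> 0" by blast
    then have s: "s > 0"
      unfolding s_def by (intro sum_pos2[of _ i]) auto
    define w where "w = (\<lambda>i. if i < m then y i / sqrt s else 0)"
    have "(\<Sum>i<m. (w i)^2) = (\<Sum>i<m. (y i)^2) / s"
      using s by (simp add: w_def power_divide sum_divide_distrib)
    then have "(\<Sum>i<m. (w i)^2) = 1" using s by (simp add: s_def)
    moreover have "quad_form m H w = quad_form m H y / s"
      using quad_form_scale[of m H y "sqrt s"] s by (simp add: w_def quad_form_def)
    ultimately have "\<mu> \<le> quad_form m H y / s"
      using zmin[of w] by (simp add: \<mu>_def w_def)
    then show ?thesis using s by (simp add: s_def field_simps)
  qed
  have "(\<Sum>j<m. H $$ (i,j) * z j) = \<mu> * z i" if i: "i < m" for i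
  proof -
    have "0 \<le> (2 * ((\<Sum>j<m. H $$ (i,j) * z j) - \<mu> * z i)) * t + (H $$ (i,i) - \<mu>) * t^2" for t
    proof -
      define y where "y = (\<lambda>k. z k + t * (if k = i then 1 else 0))"
      have "\<mu> * (\<Sum>k<m. (y k)^2) \<le> quad_form m H y" by (rule bound)
      then show ?thesis
        using quad_form_add_unit[OF i H, of z t] sum_sq_add_unit[OF i, of z t] z1
        unfolding y_def \<mu>_def by (simp add: algebra_simps)
    qed
    then have "2 * ((\<Sum>j<m. H $$ (i,j) * z j) - \<mu> * z i) = 0"
      by (rule linear_plus_quadratic_nonneg_imp_zero)
    then show ?thesis by simp
  qed
  with z1 bound show ?thesis by blast
qed

lemma eigenvalueI_index:
  fixes H :: "'a::comm_ring_1 mat"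
  assumes H: "H \<in> carrier_mat m m" and nz: "\<exists>i<m. z i \<noteq> 0"
    and eq: "\<And>i. i < m \<Longrightarrow> (\<Sum>j<m. H $$ (i,j) * z j) = \<mu> * z i"
  shows "eigenvalue H \<mu>"
proof -
  have "H *\<^sub>v vec m z = \<mu> \<cdot>\<^sub>v vec m z"
  proof (rule eq_vecI)
    fix i assume "i < dim_vec (\<mu> \<cdot>\<^sub>v vec m z)"
    then have i: "i < m" by simp
    have "(H *\<^sub>v vec m z) $ i = (\<Sum>j<m. H $$ (i,j) * z j)"
      using H i by (auto simp: mult_mat_vec_def scalar_prod_def atLeast0LessThan intro!: sum.cong)
    then show "(H *\<^sub>v vec m z) $ i = (\<mu> \<cdot>\<^sub>v vec m z) $ i" using eq[OF i] i by simp
  qed (use H in simp)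
  moreover have "vec m z \<noteq> 0\<^sub>v m" using nz by (metis index_vec index_zero_vec(1))
  ultimately have "eigenvector H (vec m z) \<mu>"
    using H unfolding eigenvector_def by simp
  then show ?thesis unfolding eigenvalue_def by blast
qed

lemma sum_sq_eq_1_imp_nonzero: "(\<Sum>i<m. (z i)^2) = (1::real) \<Longrightarrow> \<exists>i<m. z i \<noteq> 0"
  by (metis (no_types, lifting) power_zero_numeral sum.neutral lessThan_iff zero_neq_one)

lemma sym_mat_eigenvalue_le_quad_form:
  assumes "m > 0" and H: "H \<in> carrier_mat m m" "transpose_mat H = H"
  shows "\<exists>\<mu>. eigenvalue H \<mu> \<and> (\<forall>y. \<mu> * (\<Sum>i<m. (y i)^2) \<le> quad_form m H y)"
  using sym_quad_form_min_eigenvector[OF assms] eigenvalueI_index[OF H(1) sum_sq_eq_1_imp_nonzero]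
  by metis

lemma eigenvalue_abs_le_rho:
  assumes H: "H \<in> carrier_mat m m" and ev: "eigenvalue H \<mu>"
  shows "\<bar>\<mu>\<bar> \<le> rho H"
proof -
  obtain v where "eigenvector H v \<mu>" using ev unfolding eigenvalue_def by blast
  then have "m > 0"
    using H unfolding eigenvector_def by (metis carrier_matD(1) carrier_vecD eq_vecI gr0I index_zero_vec(2) less_zeroE)
  have "eigenvalue (map_mat complex_of_real H) (complex_of_real \<mu>)"
    by (rule of_real_hom.eigenvalue_hom[OF H ev])
  then have "cmod (complex_of_real \<mu>) \<le> rho H"
    using spectral_radius_mem_max(2)[OF map_carrier_mat[THEN iffD2, OF H] \<open>m > 0\<close>]
    unfolding rho_def spectrum_def by blast
  then show ?thesis by simp
qed

lemma eigenvalue_of_uminus_mat: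
  fixes H :: "'a::comm_ring_1 mat"
  assumes H: "H \<in> carrier_mat m m" and ev: "eigenvalue (- H) \<mu>"
  shows "eigenvalue H (- \<mu>)"
proof -
  obtain v where v: "v \<in> carrier_vec m" "v \<noteq> 0\<^sub>v m" "(- H) *\<^sub>v v = \<mu> \<cdot>\<^sub>v v"
    using ev H unfolding eigenvalue_def eigenvector_def by auto
  have "H *\<^sub>v v = - ((- H) *\<^sub>v v)"
    using H v(1) by (intro eq_vecI) (auto simp: scalar_prod_def sum_negf)
  also have "\<dots> = (- \<mu>) \<cdot>\<^sub>v v"
    unfolding v(3) by (intro eq_vecI) auto
  finally show ?thesis
    using H v unfolding eigenvalue_def eigenvector_def by auto
qed

lemma quad_form_uminus:
  assumes "M \<in> carrier_mat m m"
  shows "quad_form m (- M) x = - quad_form m M x"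
  using assms unfolding quad_form_def by (simp add: sum_negf)

lemma sym_mat_quad_form_le_rho:
  assumes m: "m > 0" and H: "H \<in> carrier_mat m m" "transpose_mat H = H"
  shows "quad_form m H y \<le> rho H * (\<Sum>i<m. (y i)^2)"
proof -
  have "- H \<in> carrier_mat m m" "transpose_mat (- H) = - H"
    using H by (auto simp: transpose_uminus)
  then obtain \<mu> where ev: "eigenvalue (- H) \<mu>" and le: "\<mu> * (\<Sum>i<m. (y i)^2) \<le> - quad_form m H y"
    using sym_mat_eigenvalue_le_quad_form[OF m] quad_form_uminus[OF H(1)] by metis
  have "- \<mu> \<le> rho H"
    using eigenvalue_abs_le_rho[OF H(1) eigenvalue_of_uminus_mat[OF H(1) ev]] by linarith
  then have "- \<mu> * (\<Sum>i<m. (y i)^2) \<le> rho H * (\<Sum>i<m. (y i)^2)"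
    by (intro mult_right_mono sum_nonneg) auto
  with le show ?thesis by linarith
qed

lemma lambda_min_le_eigenvalue:
  assumes H: "H \<in> carrier_mat m m" and ev: "eigenvalue H \<mu>"
  shows "eigenvalue H (lambda_min H)" "lambda_min H \<le> \<mu>"
proof -
  have "finite {k. eigenvalue H k}"
    using card_finite_spectrum(1)[OF H] unfolding spectrum_def by simp
  with ev show "eigenvalue H (lambda_min H)" "lambda_min H \<le> \<mu>"
    unfolding lambda_min_def using Min_in[of "{k. eigenvalue H k}"] by auto
qed

lemma sym_mat_lambda_min_le_quad_form:
  assumes m: "m > 0" and H: "H \<in> carrier_mat m m" "transpose_mat H = H"
  shows "lambda_min H * (\<Sum>i<m. (y i)^2) \<le> quad_form m H y"
proof -
  obtain \<mu> where ev: "eigenvalue H \<mu>" and le: "\<mu> * (\<Sum>i<m. (y i)^2) \<le> quad_form m H y"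
    using sym_mat_eigenvalue_le_quad_form[OF m H] by blast
  have "lambda_min H * (\<Sum>i<m. (y i)^2) \<le> \<mu> * (\<Sum>i<m. (y i)^2)"
    using lambda_min_le_eigenvalue(2)[OF H(1) ev] by (intro mult_right_mono sum_nonneg) auto
  with le show ?thesis by linarith
qed

lemma scalar_prod_mult_mat_vec_eq_quad_form:
  assumes "M \<in> carrier_mat m m" "x \<in> carrier_vec m"
  shows "x \<bullet> (M *\<^sub>v x) = quad_form m M (\<lambda>i. x $ i)"
  using assms unfolding quad_form_def scalar_prod_def mult_mat_vec_def
  by (auto simp: sum_distrib_left algebra_simps intro!: sum.cong)

lemma pos_def_quad_form_pos:
  assumes pd: "pos_def_real m A" and x: "\<exists>i<m. x i \<noteq> 0"
  shows "quad_form m A x > 0"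
proof -
  have A: "A \<in> carrier_mat m m" using pd unfolding pos_def_real_def by auto
  have "vec m x \<noteq> 0\<^sub>v m" using x by (metis index_vec index_zero_vec(1))
  then have "vec m x \<bullet> (A *\<^sub>v vec m x) > 0"
    using pd unfolding pos_def_real_def by auto
  moreover have "quad_form m A (\<lambda>i. vec m x $ i) = quad_form m A x"
    unfolding quad_form_def by (intro sum.cong) auto
  ultimately show ?thesis using scalar_prod_mult_mat_vec_eq_quad_form[OF A] by simp
qed

lemma pos_def_quad_form_nonneg:
  assumes "pos_def_real m A"
  shows "quad_form m A x \<ge> 0"
  using pos_def_quad_form_pos[OF assms, of x] unfolding quad_form_def
  by (cases "\<exists>i<m. x i \<noteq> 0") auto

lemma sym_part_carrier: "A \<in> carrier_mat m m \<Longrightarrow> sym_part A \<in> carrier_mat m m"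
  by (simp add: sym_part_def)

lemma skew_part_carrier: "A \<in> carrier_mat m m \<Longrightarrow> skew_part A \<in> carrier_mat m m"
  unfolding skew_part_def by (intro smult_carrier_mat minus_carrier_mat transpose_carrier_mat) auto

lemma sym_part_index:
  assumes "A \<in> carrier_mat m m" "i < m" "j < m"
  shows "sym_part A $$ (i,j) = (A $$ (i,j) + A $$ (j,i)) / 2"
  using assms by (simp add: sym_part_def)

lemma skew_part_index:
  assumes "A \<in> carrier_mat m m" "i < m" "j < m"
  shows "skew_part A $$ (i,j) = (A $$ (i,j) - A $$ (j,i)) / 2"
  using assms by (simp add: skew_part_def)

lemma transpose_sym_part:
  assumes A: "A \<in> carrier_mat m m"
  shows "transpose_mat (sym_part A) = sym_part A"
proof -
  have "dim_row (sym_part A) = m" "dim_col (sym_part A) = m"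
    using sym_part_carrier[OF A] by auto
  then show ?thesis by (intro eq_matI) (auto simp: sym_part_index[OF A])
qed

lemma transpose_skew_part:
  assumes A: "A \<in> carrier_mat m m"
  shows "transpose_mat (skew_part A) = - skew_part A"
proof -
  have "dim_row (skew_part A) = m" "dim_col (skew_part A) = m"
    using skew_part_carrier[OF A] by auto
  then show ?thesis by (intro eq_matI) (auto simp: skew_part_index[OF A] field_simps)
qed

lemma quad_form_sym_part:
  assumes A: "A \<in> carrier_mat m m"
  shows "quad_form m (sym_part A) x = quad_form m A x"
proof -
  have "quad_form m (sym_part A) x =
      ((\<Sum>a<m. \<Sum>b<m. x a * A $$ (a,b) * x b) + (\<Sum>a<m. \<Sum>b<m. x a * A $$ (b,a) * x b)) / 2"
    unfolding quad_form_def using A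
    by (simp add: sym_part_index add_divide_distrib sum.distrib sum_divide_distrib algebra_simps)
  also have "(\<Sum>a<m. \<Sum>b<m. x a * A $$ (b,a) * x b) = (\<Sum>a<m. \<Sum>b<m. x a * A $$ (a,b) * x b)"
    by (subst sum.swap) (simp add: mult.commute mult.left_commute)
  finally show ?thesis unfolding quad_form_def by simp
qed

lemma lambda_min_sym_part_pos:
  assumes pd: "pos_def_real m A" and m: "m > 0"
  shows "lambda_min (sym_part A) > 0"
proof -
  define H where "H = sym_part A"
  have A: "A \<in> carrier_mat m m" using pd unfolding pos_def_real_def by auto
  have H: "H \<in> carrier_mat m m" "transpose_mat H = H"
    using A by (simp_all add: H_def sym_part_carrier transpose_sym_part)
  obtain \<mu> where "eigenvalue H \<mu>"
    using sym_mat_eigenvalue_le_quad_form[OF m H] by blast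
  then obtain w where w: "w \<in> carrier_vec m" "w \<noteq> 0\<^sub>v m" "H *\<^sub>v w = lambda_min H \<cdot>\<^sub>v w"
    using lambda_min_le_eigenvalue(1)[OF H(1)] H(1) unfolding eigenvalue_def eigenvector_def by auto
  have "\<exists>i<m. w $ i \<noteq> 0"
    using w by (metis carrier_vecD eq_vecI index_zero_vec(1) index_zero_vec(2))
  then have "0 < quad_form m A (\<lambda>i. w $ i)" by (rule pos_def_quad_form_pos[OF pd])
  also have "\<dots> = w \<bullet> (H *\<^sub>v w)"
    using scalar_prod_mult_mat_vec_eq_quad_form[OF H(1) w(1)] quad_form_sym_part[OF A] H_def by simp
  also have "\<dots> = lambda_min H * (w \<bullet> w)" using w by simp
  finally have "0 < lambda_min H * (w \<bullet> w)" .
  moreover have "w \<bullet> w \<ge> 0" by (simp add: scalar_prod_def sum_nonneg)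
  ultimately show ?thesis unfolding H_def by (metis mult_nonpos_nonneg not_less)
qed

lemma pos_def_quad_form_bounds:
  assumes pd: "pos_def_real m A" and m: "m > 0"
  shows "lambda_min (sym_part A) * (\<Sum>i<m. (x i)^2) \<le> quad_form m A x"
    and "quad_form m A x \<le> rho (sym_part A) * (\<Sum>i<m. (x i)^2)"
proof -
  have A: "A \<in> carrier_mat m m" using pd unfolding pos_def_real_def by auto
  note H = sym_part_carrier[OF A] transpose_sym_part[OF A]
  show "lambda_min (sym_part A) * (\<Sum>i<m. (x i)^2) \<le> quad_form m A x"
    using sym_mat_lambda_min_le_quad_form[OF m H] quad_form_sym_part[OF A] by simp
  show "quad_form m A x \<le> rho (sym_part A) * (\<Sum>i<m. (x i)^2)"
    using sym_mat_quad_form_le_rho[OF m H] quad_form_sym_part[OF A] by simp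
qed

section \<open>The skew-symmetric part\<close>

lemma rho_nonneg:
  assumes "M \<in> carrier_mat m m" "m > 0"
  shows "rho M \<ge> 0"
  using spectral_radius_mem_max(1)[of "map_mat complex_of_real M" m] assms
  unfolding rho_def by auto

lemma quad_form_gram:
  assumes S: "S \<in> carrier_mat m m"
  shows "quad_form m (transpose_mat S * S) y = (\<Sum>k<m. (\<Sum>b<m. S $$ (k,b) * y b)^2)"
proof -
  have "quad_form m (transpose_mat S * S) y = (\<Sum>a<m. \<Sum>b<m. \<Sum>k<m. (S $$ (k,a) * y a) * (S $$ (k,b) * y b))"
    unfolding quad_form_def using S
    by (intro sum.cong refl)
       (simp add: scalar_prod_def atLeast0LessThan sum_distrib_left sum_distrib_right mult_ac)
  also have "\<dots> = (\<Sum>a<m. \<Sum>k<m. \<Sum>b<m. (S $$ (k,a) * y a) * (S $$ (k,b) * y b))"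
    by (rule sum.cong[OF refl], rule sum.swap)
  also have "\<dots> = (\<Sum>k<m. \<Sum>a<m. \<Sum>b<m. (S $$ (k,a) * y a) * (S $$ (k,b) * y b))"
    by (rule sum.swap)
  also have "\<dots> = (\<Sum>k<m. (\<Sum>b<m. S $$ (k,b) * y b)^2)"
    by (simp only: power2_eq_square sum_product)
  finally show ?thesis .
qed

text \<open>For skew-symmetric \<open>S\<close>, if \<open>S\<^sup>2 z = -\<sigma>\<^sup>2 z\<close> with \<open>z \<noteq> 0\<close>, then \<open>S z - \<i> \<sigma> z\<close> (or \<open>z\<close> itself,
  when that vector vanishes) is an eigenvector of \<open>S\<close> for an eigenvalue of modulus \<open>\<sigma>\<close>.\<close>

lemma skew_square_eigenvalue_le_rho:
  assumes S: "S \<in> carrier_mat m m" and z: "\<exists>i<m. z i \<noteq> 0" and \<sigma>: "\<sigma> \<ge> 0"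
    and eig: "\<And>i. i < m \<Longrightarrow> (\<Sum>k<m. S $$ (i,k) * (\<Sum>j<m. S $$ (k,j) * z j)) = - (\<sigma>^2) * z i"
  shows "\<sigma> \<le> rho S"
proof -
  define Sc where "Sc = map_mat complex_of_real S"
  have Sc: "Sc \<in> carrier_mat m m" using S by (simp add: Sc_def)
  have m: "m > 0" using z by auto
  define y where "y = (\<lambda>k. \<Sum>j<m. S $$ (k,j) * z j)"
  define w where "w = (\<lambda>k. complex_of_real (y k) - \<i> * complex_of_real \<sigma> * complex_of_real (z k))"
  have "\<exists>e. eigenvalue Sc e \<and> cmod e = \<sigma>"
  proof (cases "\<exists>i<m. w i \<noteq> 0")
    case True
    have "eigenvalue Sc (- \<i> * complex_of_real \<sigma>)"
    proof (rule eigenvalueI_index[OF Sc True])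
      fix i assume i: "i < m"
      have "(\<Sum>j<m. Sc $$ (i,j) * w j) =
         complex_of_real (\<Sum>j<m. S $$ (i,j) * y j) - \<i> * complex_of_real \<sigma> * complex_of_real (y i)"
        using i S by (simp add: Sc_def w_def y_def algebra_simps sum_subtractf sum_distrib_left)
      also have "\<dots> = - \<i> * complex_of_real \<sigma> * w i"
        using eig[OF i] unfolding w_def y_def by (simp add: algebra_simps power2_eq_square)
      finally show "(\<Sum>j<m. Sc $$ (i,j) * w j) = - \<i> * complex_of_real \<sigma> * w i" .
    qed
    then show ?thesis using \<sigma> by (intro exI[of _ "- \<i> * complex_of_real \<sigma>"]) (simp add: norm_mult)
  next
    case False
    have "eigenvalue Sc (\<i> * complex_of_real \<sigma>)"
    proof (rule eigenvalueI_index[OF Sc, of "\<lambda>k. complex_of_real (z k)"])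
      show "\<exists>i<m. complex_of_real (z i) \<noteq> 0" using z by simp
      fix i assume i: "i < m"
      have "(\<Sum>j<m. Sc $$ (i,j) * complex_of_real (z j)) = complex_of_real (y i)"
        using i S by (simp add: Sc_def y_def)
      also have "\<dots> = \<i> * complex_of_real \<sigma> * complex_of_real (z i)"
        using False i unfolding w_def by auto
      finally show "(\<Sum>j<m. Sc $$ (i,j) * complex_of_real (z j)) = \<i> * complex_of_real \<sigma> * complex_of_real (z i)" .
    qed
    then show ?thesis using \<sigma> by (intro exI[of _ "\<i> * complex_of_real \<sigma>"]) (simp add: norm_mult)
  qed
  then show ?thesis
    using spectral_radius_mem_max(2)[OF Sc m] unfolding spectrum_def rho_def Sc_def by auto
qed

lemma skew_mat_norm_le_rho:
  assumes m: "m > 0" and S: "S \<in> carrier_mat m m" "transpose_mat S = - S"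
  shows "(\<Sum>k<m. (\<Sum>b<m. S $$ (k,b) * y b)^2) \<le> (rho S)^2 * (\<Sum>i<m. (y i)^2)"
proof -
  have SS: "S * S \<in> carrier_mat m m" "transpose_mat (S * S) = S * S"
    using S by (auto simp: transpose_mult[of _ m m _ m])
  have "transpose_mat S * S = - (S * S)"
    unfolding S(2) using S(1) by (intro uminus_mult_left_mat) simp
  then have gram: "quad_form m (S * S) y = - (\<Sum>k<m. (\<Sum>b<m. S $$ (k,b) * y b)^2)" for y
    using quad_form_gram[OF S(1), of y] quad_form_uminus[OF SS(1), of y] by simp
  obtain \<mu> z where z1: "(\<Sum>i<m. (z i)^2) = 1"
    and zeig: "\<forall>i<m. (\<Sum>j<m. (S * S) $$ (i,j) * z j) = \<mu> * z i"
    and zb: "\<forall>y. \<mu> * (\<Sum>i<m. (y i)^2) \<le> quad_form m (S * S) y"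
    using sym_quad_form_min_eigenvector[OF m SS] by blast
  have "\<mu> = \<mu> * (\<Sum>i<m. (z i)^2)" using z1 by simp
  also have "\<dots> \<le> - (\<Sum>k<m. (\<Sum>b<m. S $$ (k,b) * z b)^2)"
    by (subst gram[symmetric]) (rule spec[OF zb])
  also have "\<dots> \<le> 0"
    by (simp add: sum_nonneg)
  finally have "- \<mu> \<ge> 0" by simp
  define \<sigma> where "\<sigma> = sqrt (- \<mu>)"
  have \<sigma>: "\<sigma> \<ge> 0" "\<sigma>^2 = - \<mu>" using \<open>- \<mu> \<ge> 0\<close> by (auto simp: \<sigma>_def)
  have "(\<Sum>k<m. S $$ (i,k) * (\<Sum>j<m. S $$ (k,j) * z j)) = - (\<sigma>^2) * z i" if i: "i < m" for i
  proof -
    have "(\<Sum>k<m. S $$ (i,k) * (\<Sum>j<m. S $$ (k,j) * z j)) = (\<Sum>k<m. \<Sum>j<m. S $$ (i,k) * S $$ (k,j) * z j)"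
      by (simp add: sum_distrib_left mult.assoc)
    also have "\<dots> = (\<Sum>j<m. \<Sum>k<m. S $$ (i,k) * S $$ (k,j) * z j)"
      by (rule sum.swap)
    also have "\<dots> = (\<Sum>j<m. (S * S) $$ (i,j) * z j)"
      using i S(1) by (intro sum.cong refl) (simp add: scalar_prod_def atLeast0LessThan sum_distrib_right)
    finally show ?thesis using zeig i \<sigma>(2) by simp
  qed
  then have "\<sigma> \<le> rho S"
    by (rule skew_square_eigenvalue_le_rho[OF S(1) sum_sq_eq_1_imp_nonzero[OF z1] \<sigma>(1)])
  then have "\<sigma>^2 \<le> (rho S)^2"
    using \<sigma>(1) by (rule power_mono)
  then have "- \<mu> * (\<Sum>i<m. (y i)^2) \<le> (rho S)^2 * (\<Sum>i<m. (y i)^2)"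
    unfolding \<sigma>(2) by (intro mult_right_mono sum_nonneg) auto
  moreover have "\<mu> * (\<Sum>i<m. (y i)^2) \<le> - (\<Sum>k<m. (\<Sum>b<m. S $$ (k,b) * y b)^2)"
    by (subst gram[symmetric]) (rule spec[OF zb])
  ultimately show ?thesis by linarith
qed

lemma skew_part_bilinear_bound:
  assumes A: "A \<in> carrier_mat m m" and m: "m > 0"
  shows "\<bar>\<Sum>a<m. \<Sum>b<m. A $$ (a,b) * (x a * y b - y a * x b)\<bar>
           \<le> rho (skew_part A) * ((\<Sum>i<m. (x i)^2) + (\<Sum>i<m. (y i)^2))"
proof -
  define S where "S = skew_part A"
  define r where "r = rho S"
  define X where "X = (\<Sum>i<m. (x i)^2)"
  define Y where "Y = (\<Sum>i<m. (y i)^2)"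
  have S: "S \<in> carrier_mat m m" "transpose_mat S = - S"
    using A by (simp_all add: S_def skew_part_carrier transpose_skew_part)
  have r: "r \<ge> 0" using rho_nonneg[OF S(1) m] by (simp add: r_def)
  have X: "X \<ge> 0" and Y: "Y \<ge> 0" by (auto simp: X_def Y_def intro: sum_nonneg)
  have "(\<Sum>a<m. \<Sum>b<m. A $$ (a,b) * (x a * y b - y a * x b))
     = (\<Sum>a<m. \<Sum>b<m. A $$ (a,b) * x a * y b) - (\<Sum>a<m. \<Sum>b<m. A $$ (a,b) * y a * x b)"
    by (simp add: sum_subtractf[symmetric] algebra_simps)
  also have "(\<Sum>a<m. \<Sum>b<m. A $$ (a,b) * y a * x b) = (\<Sum>a<m. \<Sum>b<m. A $$ (b,a) * x a * y b)"
    by (subst sum.swap) (simp add: mult.commute mult.left_commute)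
  also have "(\<Sum>a<m. \<Sum>b<m. A $$ (a,b) * x a * y b) - (\<Sum>a<m. \<Sum>b<m. A $$ (b,a) * x a * y b)
     = (\<Sum>a<m. \<Sum>b<m. 2 * (x a * (S $$ (a,b) * y b)))"
    unfolding sum_subtractf[symmetric] using A
    by (intro sum.cong refl) (simp add: S_def skew_part_index algebra_simps)
  also have "\<dots> = 2 * (\<Sum>a<m. x a * (\<Sum>b<m. S $$ (a,b) * y b))"
    by (simp add: sum_distrib_left)
  finally have T: "(\<Sum>a<m. \<Sum>b<m. A $$ (a,b) * (x a * y b - y a * x b))
     = 2 * (\<Sum>a<m. x a * (\<Sum>b<m. S $$ (a,b) * y b))" .
  have "(\<Sum>a<m. x a * (\<Sum>b<m. S $$ (a,b) * y b))^2 \<le> X * (\<Sum>a<m. (\<Sum>b<m. S $$ (a,b) * y b)^2)"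
    unfolding X_def by (rule Cauchy_Schwarz_ineq_sum)
  also have "\<dots> \<le> X * (r^2 * Y)"
    using skew_mat_norm_le_rho[OF m S, of y] X unfolding r_def Y_def by (intro mult_left_mono) auto
  also have "\<dots> \<le> (r * (X + Y) / 2)^2"
    using sum_squares_ge_zero[of "r * (X - Y)" 0]
    by (simp add: power2_eq_square algebra_simps divide_simps)
  finally have "\<bar>\<Sum>a<m. x a * (\<Sum>b<m. S $$ (a,b) * y b)\<bar> \<le> \<bar>r * (X + Y) / 2\<bar>"
    by (simp only: abs_le_square_iff)
  then have "\<bar>\<Sum>a<m. x a * (\<Sum>b<m. S $$ (a,b) * y b)\<bar> \<le> r * (X + Y) / 2"
    using r X Y by simp
  then show ?thesis unfolding T S_def[symmetric] r_def[symmetric] X_def[symmetric] Y_def[symmetric]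
    by simp
qed

section \<open>Complex quadratic forms and the block system\<close>

definition cquad_form :: "nat \<Rightarrow> real mat \<Rightarrow> complex vec \<Rightarrow> complex" where
  "cquad_form m M u = (\<Sum>i<m. cnj (u $ i) * (\<Sum>j<m. complex_of_real (M $$ (i,j)) * u $ j))"

lemma Re_cquad_form:
  "Re (cquad_form m M u) = quad_form m M (\<lambda>i. Re (u $ i)) + quad_form m M (\<lambda>i. Im (u $ i))"
  unfolding cquad_form_def quad_form_def
  by (simp add: Re_sum sum_distrib_left algebra_simps sum.distrib)

lemma Im_cquad_form:
  "Im (cquad_form m M u) = (\<Sum>a<m. \<Sum>b<m. M $$ (a,b) * (Re (u $ a) * Im (u $ b) - Im (u $ a) * Re (u $ b)))"
  unfolding cquad_form_def
  by (simp add: Im_sum sum_distrib_left algebra_simps sum_subtractf)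

lemma pos_def_Re_cquad_form_pos:
  assumes pd: "pos_def_real m A" and nz: "\<exists>i<m. u $ i \<noteq> 0"
  shows "Re (cquad_form m A u) > 0"
proof -
  obtain i where i: "i < m" "u $ i \<noteq> 0" using nz by blast
  then have "Re (u $ i) \<noteq> 0 \<or> Im (u $ i) \<noteq> 0" using complex_eq_iff by force
  then show ?thesis
  proof
    assume "Re (u $ i) \<noteq> 0"
    then have "quad_form m A (\<lambda>i. Re (u $ i)) > 0"
      using i(1) by (intro pos_def_quad_form_pos[OF pd]) auto
    then show ?thesis
      unfolding Re_cquad_form using pos_def_quad_form_nonneg[OF pd, of "\<lambda>i. Im (u $ i)"] by linarith
  next
    assume "Im (u $ i) \<noteq> 0"
    then have "quad_form m A (\<lambda>i. Im (u $ i)) > 0"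
      using i(1) by (intro pos_def_quad_form_pos[OF pd]) auto
    then show ?thesis
      unfolding Re_cquad_form using pos_def_quad_form_nonneg[OF pd, of "\<lambda>i. Re (u $ i)"] by linarith
  qed
qed

lemma sum_cnj_mult_real_mat:
  fixes B :: "real mat" and p q :: "nat \<Rightarrow> complex"
  shows "(\<Sum>i<m. cnj (p i) * (\<Sum>k<n. complex_of_real (B $$ (i,k)) * q k)) =
    (\<Sum>k<n. q k * cnj (\<Sum>i<m. complex_of_real (B $$ (i,k)) * p i))"
  by (simp add: sum_distrib_left sum_distrib_right algebra_simps cnj_sum sum.swap[of _ "{..<m}"])

lemma sum_cmod_sq_pos:
  assumes "i < m" "u $ i \<noteq> 0"
  shows "(\<Sum>i<m. (cmod (u $ i))^2) > 0"
  using assms by (intro sum_pos2[of _ i]) auto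

lemma sum_cnj_mult_self: "(\<Sum>i<m. cnj (u $ i) * u $ i) = complex_of_real (\<Sum>i<m. (cmod (u $ i))^2)"
  by (simp add: complex_mult_cnj cmod_power2 mult.commute)

lemma four_block_mat_mult_append_vec_index:
  fixes A' :: "'a::comm_ring_1 mat"
  assumes "A' \<in> carrier_mat r1 c1" "B' \<in> carrier_mat r1 c2" "C' \<in> carrier_mat r2 c1"
    "D' \<in> carrier_mat r2 c2" "p \<in> carrier_vec c1" "q \<in> carrier_vec c2"
  shows "i < r1 \<Longrightarrow> (four_block_mat A' B' C' D' *\<^sub>v (p @\<^sub>v q)) $ i = (A' *\<^sub>v p) $ i + (B' *\<^sub>v q) $ i"
    "k < r2 \<Longrightarrow> (four_block_mat A' B' C' D' *\<^sub>v (p @\<^sub>v q)) $ (r1 + k) = (C' *\<^sub>v p) $ k + (D' *\<^sub>v q) $ k"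
  using assms by (simp_all add: four_block_mat_mult_vec)

lemma of_real_mat_mult_vec_index:
  assumes "M \<in> carrier_mat r c" "p \<in> carrier_vec c" "i < r"
  shows "(map_mat complex_of_real M *\<^sub>v p) $ i = (\<Sum>j<c. complex_of_real (M $$ (i,j)) * p $ j)"
  using assms by (auto simp: mult_mat_vec_def scalar_prod_def atLeast0LessThan mult.commute intro!: sum.cong)

lemma of_real_transpose_mult_vec_index:
  assumes "B \<in> carrier_mat m n" "u \<in> carrier_vec m" "k < n"
  shows "(transpose_mat (map_mat complex_of_real B) *\<^sub>v u) $ k = (\<Sum>i<m. complex_of_real (B $$ (i,k)) * u $ i)"
  using assms by (auto simp: mult_mat_vec_def scalar_prod_def atLeast0LessThan mult.commute intro!: sum.cong)

lemma sum_of_real_diag_mult: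
  fixes X :: "nat \<Rightarrow> complex"
  assumes "i < m"
  shows "(\<Sum>j<m. complex_of_real (if i = j then c else 0) * X j) = complex_of_real c * X i"
proof -
  have "(\<Sum>j<m. complex_of_real (if i = j then c else 0) * X j) = (\<Sum>j<m. if j = i then complex_of_real c * X j else 0)"
    by (rule sum.cong) auto
  then show ?thesis using assms by simp
qed

lemma of_real_P_MGSSP_blocks:
  fixes A B :: "real mat"
  assumes A: "A \<in> carrier_mat m m" and B: "B \<in> carrier_mat m n"
  shows "map_mat complex_of_real (P_MGSSP \<alpha> \<beta> A B) = four_block_mat
      (map_mat complex_of_real (\<alpha> \<cdot>\<^sub>m 1\<^sub>m m + 2 \<cdot>\<^sub>m A)) (map_mat complex_of_real (2 \<cdot>\<^sub>m B))
      (map_mat complex_of_real (- (2 \<cdot>\<^sub>m transpose_mat B))) (map_mat complex_of_real (\<beta> \<cdot>\<^sub>m 1\<^sub>m n))"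
proof -
  have dims: "dim_row A = m" "dim_col B = n" using A B by auto
  show ?thesis
    unfolding P_MGSSP_def dims using A B by (intro map_four_block_mat) auto
qed

lemma P_MGSSP_mult_append_vec:
  fixes A B :: "real mat"
  assumes A: "A \<in> carrier_mat m m" and B: "B \<in> carrier_mat m n"
    and p: "p \<in> carrier_vec m" and q: "q \<in> carrier_vec n"
  shows "i < m \<Longrightarrow> (map_mat complex_of_real (P_MGSSP \<alpha> \<beta> A B) *\<^sub>v (p @\<^sub>v q)) $ i =
      complex_of_real \<alpha> * p $ i + 2 * (\<Sum>j<m. complex_of_real (A $$ (i,j)) * p $ j)
      + 2 * (\<Sum>k<n. complex_of_real (B $$ (i,k)) * q $ k)"
   "k < n \<Longrightarrow> (map_mat complex_of_real (P_MGSSP \<alpha> \<beta> A B) *\<^sub>v (p @\<^sub>v q)) $ (m + k) =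
      - 2 * (\<Sum>i<m. complex_of_real (B $$ (i,k)) * p $ i) + complex_of_real \<beta> * q $ k"
proof -
  have c: "\<alpha> \<cdot>\<^sub>m 1\<^sub>m m + 2 \<cdot>\<^sub>m A \<in> carrier_mat m m" "2 \<cdot>\<^sub>m B \<in> carrier_mat m n"
    "- (2 \<cdot>\<^sub>m transpose_mat B) \<in> carrier_mat n m" "\<beta> \<cdot>\<^sub>m 1\<^sub>m n \<in> carrier_mat n n"
    using A B by auto
  note blocks = four_block_mat_mult_append_vec_index[OF map_carrier_mat[THEN iffD2, OF c(1)]
      map_carrier_mat[THEN iffD2, OF c(2)] map_carrier_mat[THEN iffD2, OF c(3)]
      map_carrier_mat[THEN iffD2, OF c(4)] p q]
  note rows = of_real_mat_mult_vec_index[OF c(1) p] of_real_mat_mult_vec_index[OF c(2) q]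
    of_real_mat_mult_vec_index[OF c(3) p] of_real_mat_mult_vec_index[OF c(4) q]
  show "(map_mat complex_of_real (P_MGSSP \<alpha> \<beta> A B) *\<^sub>v (p @\<^sub>v q)) $ i =
      complex_of_real \<alpha> * p $ i + 2 * (\<Sum>j<m. complex_of_real (A $$ (i,j)) * p $ j)
      + 2 * (\<Sum>k<n. complex_of_real (B $$ (i,k)) * q $ k)" if i: "i < m"
  proof -
    have "(\<Sum>j<m. complex_of_real ((\<alpha> \<cdot>\<^sub>m 1\<^sub>m m + 2 \<cdot>\<^sub>m A) $$ (i,j)) * p $ j)
        = (\<Sum>j<m. complex_of_real (if i = j then \<alpha> else 0) * p $ j + 2 * (complex_of_real (A $$ (i,j)) * p $ j))"
      using i A by (intro sum.cong refl) (auto simp: algebra_simps)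
    also have "\<dots> = complex_of_real \<alpha> * p $ i + 2 * (\<Sum>j<m. complex_of_real (A $$ (i,j)) * p $ j)"
      using i by (simp add: sum.distrib sum_of_real_diag_mult sum_distrib_left)
    moreover have "(\<Sum>k<n. complex_of_real ((2 \<cdot>\<^sub>m B) $$ (i,k)) * q $ k)
        = 2 * (\<Sum>k<n. complex_of_real (B $$ (i,k)) * q $ k)"
      using i B by (simp add: sum_distrib_left mult.assoc)
    ultimately show ?thesis
      unfolding of_real_P_MGSSP_blocks[OF A B] blocks(1)[OF i] rows(1,2)[OF i] by simp
  qed
  show "(map_mat complex_of_real (P_MGSSP \<alpha> \<beta> A B) *\<^sub>v (p @\<^sub>v q)) $ (m + k) =
      - 2 * (\<Sum>i<m. complex_of_real (B $$ (i,k)) * p $ i) + complex_of_real \<beta> * q $ k" if k: "k < n"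
  proof -
    have "(\<Sum>i<m. complex_of_real ((- (2 \<cdot>\<^sub>m transpose_mat B)) $$ (k,i)) * p $ i)
        = - 2 * (\<Sum>i<m. complex_of_real (B $$ (i,k)) * p $ i)"
      using k B by (simp add: sum_distrib_left sum_negf mult.assoc)
    moreover have "(\<Sum>j<n. complex_of_real ((\<beta> \<cdot>\<^sub>m 1\<^sub>m n) $$ (k,j)) * q $ j)
        = (\<Sum>j<n. complex_of_real (if k = j then \<beta> else 0) * q $ j)"
      using k by (intro sum.cong refl) auto
    moreover have "\<dots> = complex_of_real \<beta> * q $ k" using k by (rule sum_of_real_diag_mult)
    ultimately show ?thesis
      unfolding of_real_P_MGSSP_blocks[OF A B] blocks(2)[OF k] rows(3,4)[OF k] by simp
  qed
qed

lemma saddle_mat_mult_append_vec: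
  fixes A B :: "real mat"
  assumes A: "A \<in> carrier_mat m m" and B: "B \<in> carrier_mat m n"
    and p: "p \<in> carrier_vec m" and q: "q \<in> carrier_vec n"
  shows "i < m \<Longrightarrow> (map_mat complex_of_real (saddle_mat A B) *\<^sub>v (p @\<^sub>v q)) $ i =
      (\<Sum>j<m. complex_of_real (A $$ (i,j)) * p $ j) + (\<Sum>k<n. complex_of_real (B $$ (i,k)) * q $ k)"
   "k < n \<Longrightarrow> (map_mat complex_of_real (saddle_mat A B) *\<^sub>v (p @\<^sub>v q)) $ (m + k) =
      - (\<Sum>i<m. complex_of_real (B $$ (i,k)) * p $ i)"
proof -
  define C1 where "C1 = - transpose_mat B"
  define D1 where "D1 = (0\<^sub>m n n :: real mat)"
  have c: "C1 \<in> carrier_mat n m" "D1 \<in> carrier_mat n n"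
    using B by (auto simp: C1_def D1_def)
  have dims: "dim_col B = n" using B by auto
  have P: "map_mat complex_of_real (saddle_mat A B) = four_block_mat (map_mat complex_of_real A)
     (map_mat complex_of_real B) (map_mat complex_of_real C1) (map_mat complex_of_real D1)"
    unfolding saddle_mat_def dims C1_def[symmetric] D1_def[symmetric]
    using A B c by (rule map_four_block_mat)
  note blocks = four_block_mat_mult_append_vec_index[OF map_carrier_mat[THEN iffD2, OF A]
      map_carrier_mat[THEN iffD2, OF B] map_carrier_mat[THEN iffD2, OF c(1)]
      map_carrier_mat[THEN iffD2, OF c(2)] p q]
  show "i < m \<Longrightarrow> (map_mat complex_of_real (saddle_mat A B) *\<^sub>v (p @\<^sub>v q)) $ i =
      (\<Sum>j<m. complex_of_real (A $$ (i,j)) * p $ j) + (\<Sum>k<n. complex_of_real (B $$ (i,k)) * q $ k)"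
    unfolding P using blocks(1) of_real_mat_mult_vec_index[OF A p] of_real_mat_mult_vec_index[OF B q]
    by simp
  show "k < n \<Longrightarrow> (map_mat complex_of_real (saddle_mat A B) *\<^sub>v (p @\<^sub>v q)) $ (m + k) =
      - (\<Sum>i<m. complex_of_real (B $$ (i,k)) * p $ i)"
  proof -
    assume k: "k < n"
    have "(map_mat complex_of_real C1 *\<^sub>v p) $ k = - (\<Sum>i<m. complex_of_real (B $$ (i,k)) * p $ i)"
      unfolding of_real_mat_mult_vec_index[OF c(1) p k]
      using k B by (simp add: C1_def sum_negf)
    moreover have "(map_mat complex_of_real D1 *\<^sub>v q) $ k = 0"
      unfolding of_real_mat_mult_vec_index[OF c(2) q k] using k by (simp add: D1_def)
    ultimately show ?thesis unfolding P blocks(2)[OF k] by simp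
  qed
qed

text \<open>Testing \<open>P w = 0\<close>, \<open>w = (p, q)\<close>, against \<open>p\<close> gives \<open>\<alpha>|p|\<^sup>2 + 2 p\<^sup>*Ap + (4/\<beta>)|B\<^sup>Tp|\<^sup>2 = 0\<close> after
  eliminating \<open>q = (2/\<beta>) B\<^sup>Tp\<close>; all three terms have nonnegative real part, so \<open>p = 0\<close> and then \<open>q = 0\<close>.\<close>

lemma P_MGSSP_kernel_trivial:
  fixes A B :: "real mat"
  assumes pd: "pos_def_real m A" and B: "B \<in> carrier_mat m n" and \<alpha>: "\<alpha> \<ge> 0" and \<beta>: "\<beta> > 0"
    and p: "p \<in> carrier_vec m" and q: "q \<in> carrier_vec n"
    and ker: "map_mat complex_of_real (P_MGSSP \<alpha> \<beta> A B) *\<^sub>v (p @\<^sub>v q) = 0\<^sub>v (m + n)"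
  shows "p @\<^sub>v q = 0\<^sub>v (m + n)"
proof -
  have A: "A \<in> carrier_mat m m" using pd unfolding pos_def_real_def by auto
  define r where "r = (\<lambda>k. \<Sum>i<m. complex_of_real (B $$ (i,k)) * p $ i)"
  have row1: "complex_of_real \<alpha> * p $ i + 2 * (\<Sum>j<m. complex_of_real (A $$ (i,j)) * p $ j)
      + 2 * (\<Sum>k<n. complex_of_real (B $$ (i,k)) * q $ k) = 0" if i: "i < m" for i
    using P_MGSSP_mult_append_vec(1)[OF A B p q i, of \<alpha> \<beta>] arg_cong[OF ker, of "\<lambda>w. w $ i"] i by simp
  have q_r: "q $ k = complex_of_real (2 / \<beta>) * r k" if k: "k < n" for k
  proof -
    have "- 2 * r k + complex_of_real \<beta> * q $ k = 0"
      using P_MGSSP_mult_append_vec(2)[OF A B p q k, of \<alpha> \<beta>] arg_cong[OF ker, of "\<lambda>w. w $ (m + k)"] k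
      by (simp add: r_def)
    then show ?thesis using \<beta> by (simp add: field_simps)
  qed
  define N where "N = (\<Sum>i<m. (cmod (p $ i))^2)"
  have "0 = (\<Sum>i<m. cnj (p $ i) * (complex_of_real \<alpha> * p $ i + 2 * (\<Sum>j<m. complex_of_real (A $$ (i,j)) * p $ j)
      + 2 * (\<Sum>k<n. complex_of_real (B $$ (i,k)) * q $ k)))"
    using row1 by simp
  also have "\<dots> = complex_of_real \<alpha> * (\<Sum>i<m. cnj (p $ i) * p $ i) + 2 * cquad_form m A p
      + 2 * (\<Sum>i<m. cnj (p $ i) * (\<Sum>k<n. complex_of_real (B $$ (i,k)) * q $ k))"
    unfolding cquad_form_def by (simp add: algebra_simps sum.distrib sum_distrib_left)
  also have "(\<Sum>i<m. cnj (p $ i) * (\<Sum>k<n. complex_of_real (B $$ (i,k)) * q $ k)) = (\<Sum>k<n. q $ k * cnj (r k))"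
    unfolding r_def by (rule sum_cnj_mult_real_mat)
  also have "\<dots> = (\<Sum>k<n. complex_of_real (2 / \<beta> * (cmod (r k))^2))"
    using q_r by (intro sum.cong refl) (simp add: complex_mult_cnj cmod_power2 mult.assoc)
  also have "\<dots> = complex_of_real (2 / \<beta> * (\<Sum>k<n. (cmod (r k))^2))"
    by (simp add: sum_distrib_left)
  finally have "0 = complex_of_real \<alpha> * (\<Sum>i<m. cnj (p $ i) * p $ i) + 2 * cquad_form m A p
      + 2 * complex_of_real (2 / \<beta> * (\<Sum>k<n. (cmod (r k))^2))" .
  from arg_cong[OF this, of Re]
  have "0 = \<alpha> * N + 2 * Re (cquad_form m A p) + 2 * (2 / \<beta> * (\<Sum>k<n. (cmod (r k))^2))"
    unfolding sum_cnj_mult_self N_def by simp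
  moreover have "N \<ge> 0" "0 \<le> 2 / \<beta> * (\<Sum>k<n. (cmod (r k))^2)"
    using \<beta> by (simp_all add: N_def sum_nonneg)
  ultimately have "Re (cquad_form m A p) \<le> 0"
    using \<alpha> by (smt (verit) mult_nonneg_nonneg)
  then have p0: "\<forall>i<m. p $ i = 0" using pos_def_Re_cquad_form_pos[OF pd, of p] by force
  then have "\<forall>k<n. q $ k = 0" using q_r by (simp add: r_def)
  with p0 show ?thesis using p q by (intro eq_vecI) auto
qed

lemma P_MGSSP_invertible:
  fixes A B :: "real mat"
  assumes pd: "pos_def_real m A" and B: "B \<in> carrier_mat m n" and \<alpha>: "\<alpha> \<ge> 0" and \<beta>: "\<beta> > 0"
  shows "\<exists>Pinv. mat_inverse (map_mat complex_of_real (P_MGSSP \<alpha> \<beta> A B)) = Some Pinv \<and>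
     map_mat complex_of_real (P_MGSSP \<alpha> \<beta> A B) * Pinv = 1\<^sub>m (m+n) \<and> Pinv \<in> carrier_mat (m+n) (m+n)"
proof -
  have A: "A \<in> carrier_mat m m" using pd unfolding pos_def_real_def by auto
  define Pc where "Pc = map_mat complex_of_real (P_MGSSP \<alpha> \<beta> A B)"
  have Pc: "Pc \<in> carrier_mat (m+n) (m+n)" using A B by (simp add: Pc_def P_MGSSP_def)
  have "det Pc \<noteq> 0"
  proof
    assume "det Pc = 0"
    then obtain w where w: "w \<in> carrier_vec (m+n)" "w \<noteq> 0\<^sub>v (m+n)" "Pc *\<^sub>v w = 0\<^sub>v (m+n)"
      using det_0_iff_vec_prod_zero_field[OF Pc] by blast
    have "w = vec_first w m @\<^sub>v vec_last w n" using w(1) by simp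
    then show False
      using P_MGSSP_kernel_trivial[OF pd B \<alpha> \<beta>, of "vec_first w m" "vec_last w n"] w
      unfolding Pc_def by auto
  qed
  then have "Pc \<in> Units (ring_mat TYPE(complex) (m+n) undefined)"
    by (rule det_non_zero_imp_unit[OF Pc])
  then obtain Pinv where "mat_inverse Pc = Some Pinv"
    using mat_inverse(1)[OF Pc, of undefined] by (cases "mat_inverse Pc") auto
  then show ?thesis using mat_inverse(2)[OF Pc] unfolding Pc_def by blast
qed

section \<open>Localisation of the eigenvalues\<close>

lemma MGSSP_eigen_equations:
  fixes A B :: "real mat"
  assumes pd: "pos_def_real m A" and B: "B \<in> carrier_mat m n" and \<alpha>: "\<alpha> \<ge> 0" and \<beta>: "\<beta> > 0"
    and u: "u \<in> carrier_vec m" and v: "v \<in> carrier_vec n"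
    and eig: "eigenvector
           (the (mat_inverse (map_mat complex_of_real (P_MGSSP \<alpha> \<beta> A B)))
              * map_mat complex_of_real (saddle_mat A B))
           (u @\<^sub>v v) lam"
  shows "(\<exists>i<m. u $ i \<noteq> 0) \<or> (\<exists>k<n. v $ k \<noteq> 0)"
    and "\<And>i. i < m \<Longrightarrow>
      (\<Sum>j<m. complex_of_real (A $$ (i,j)) * u $ j) + (\<Sum>k<n. complex_of_real (B $$ (i,k)) * v $ k)
     = lam * (complex_of_real \<alpha> * u $ i + 2 * (\<Sum>j<m. complex_of_real (A $$ (i,j)) * u $ j)
      + 2 * (\<Sum>k<n. complex_of_real (B $$ (i,k)) * v $ k))"
    and "\<And>k. k < n \<Longrightarrow> - (\<Sum>i<m. complex_of_real (B $$ (i,k)) * u $ i)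
     = lam * (- 2 * (\<Sum>i<m. complex_of_real (B $$ (i,k)) * u $ i) + complex_of_real \<beta> * v $ k)"
proof -
  have A: "A \<in> carrier_mat m m" using pd unfolding pos_def_real_def by auto
  define Pc where "Pc = map_mat complex_of_real (P_MGSSP \<alpha> \<beta> A B)"
  define Mc where "Mc = map_mat complex_of_real (saddle_mat A B)"
  obtain Pinv where Pinv: "mat_inverse Pc = Some Pinv" "Pc * Pinv = 1\<^sub>m (m+n)" "Pinv \<in> carrier_mat (m+n) (m+n)"
    using P_MGSSP_invertible[OF pd B \<alpha> \<beta>] unfolding Pc_def by blast
  have Pc: "Pc \<in> carrier_mat (m+n) (m+n)" using A B by (simp add: Pc_def P_MGSSP_def)
  have Mc: "Mc \<in> carrier_mat (m+n) (m+n)" using A B by (simp add: Mc_def saddle_mat_def)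
  have x: "u @\<^sub>v v \<in> carrier_vec (m+n)" using u v by simp
  have "eigenvector (Pinv * Mc) (u @\<^sub>v v) lam"
    using eig Pinv(1) unfolding Pc_def Mc_def by simp
  then have x0: "u @\<^sub>v v \<noteq> 0\<^sub>v (m+n)" and evx: "(Pinv * Mc) *\<^sub>v (u @\<^sub>v v) = lam \<cdot>\<^sub>v (u @\<^sub>v v)"
    using Pinv(3) unfolding eigenvector_def by auto
  show "(\<exists>i<m. u $ i \<noteq> 0) \<or> (\<exists>k<n. v $ k \<noteq> 0)"
  proof (rule ccontr)
    assume "\<not> ?thesis"
    then have "u @\<^sub>v v = 0\<^sub>v (m+n)" using u v by (intro eq_vecI) auto
    with x0 show False by simp
  qed
  have "Mc *\<^sub>v (u @\<^sub>v v) = (Pc * Pinv) *\<^sub>v (Mc *\<^sub>v (u @\<^sub>v v))" using Pinv(2) Mc x by simp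
  also have "\<dots> = Pc *\<^sub>v ((Pinv * Mc) *\<^sub>v (u @\<^sub>v v))" using Pc Pinv(3) Mc x by simp
  also have "\<dots> = lam \<cdot>\<^sub>v (Pc *\<^sub>v (u @\<^sub>v v))" unfolding evx using Pc x by (rule mult_mat_vec)
  finally have eq: "\<And>i. i < m + n \<Longrightarrow> (Mc *\<^sub>v (u @\<^sub>v v)) $ i = lam * (Pc *\<^sub>v (u @\<^sub>v v)) $ i"
    using Pc by simp
  show "(\<Sum>j<m. complex_of_real (A $$ (i,j)) * u $ j) + (\<Sum>k<n. complex_of_real (B $$ (i,k)) * v $ k)
     = lam * (complex_of_real \<alpha> * u $ i + 2 * (\<Sum>j<m. complex_of_real (A $$ (i,j)) * u $ j)
      + 2 * (\<Sum>k<n. complex_of_real (B $$ (i,k)) * v $ k))" if i: "i < m" for i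
    using eq[of i] i unfolding Mc_def Pc_def saddle_mat_mult_append_vec(1)[OF A B u v i]
      P_MGSSP_mult_append_vec(1)[OF A B u v i] by simp
  show "- (\<Sum>i<m. complex_of_real (B $$ (i,k)) * u $ i)
     = lam * (- 2 * (\<Sum>i<m. complex_of_real (B $$ (i,k)) * u $ i) + complex_of_real \<beta> * v $ k)" if k: "k < n" for k
    using eq[of "m + k"] k unfolding Mc_def Pc_def saddle_mat_mult_append_vec(2)[OF A B u v k]
      P_MGSSP_mult_append_vec(2)[OF A B u v k] by simp
qed

lemma cquad_form_eigen_relation:
  fixes A :: "real mat"
  assumes eq: "\<And>i. i < m \<Longrightarrow> (\<Sum>j<m. complex_of_real (A $$ (i,j)) * u $ j) =
        lam * (complex_of_real \<alpha> * u $ i + 2 * (\<Sum>j<m. complex_of_real (A $$ (i,j)) * u $ j))"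
  shows "cquad_form m A u = lam * (complex_of_real (\<alpha> * (\<Sum>i<m. (cmod (u $ i))^2)) + 2 * cquad_form m A u)"
proof -
  have "cquad_form m A u = (\<Sum>i<m. cnj (u $ i) *
      (lam * (complex_of_real \<alpha> * u $ i + 2 * (\<Sum>j<m. complex_of_real (A $$ (i,j)) * u $ j))))"
    unfolding cquad_form_def using eq by (intro sum.cong refl) simp
  also have "\<dots> = lam * (complex_of_real \<alpha> * (\<Sum>i<m. cnj (u $ i) * u $ i) + 2 * cquad_form m A u)"
    unfolding cquad_form_def by (simp add: algebra_simps sum.distrib sum_distrib_left)
  finally show ?thesis unfolding sum_cnj_mult_self by simp
qed

text \<open>The real and imaginary parts of \<open>a + \<i> b = (p + \<i> r)(\<alpha> + 2a + 2\<i> b)\<close>, solved for \<open>p + \<i> r\<close>.\<close>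

lemma rayleigh_relation_solution:
  fixes a b p r \<alpha> :: real
  assumes e1: "a = p * (\<alpha> + 2 * a) - 2 * r * b" and e2: "b = 2 * p * b + r * (\<alpha> + 2 * a)"
  shows "p * ((\<alpha> + 2 * a)^2 + 4 * b^2) = a * (\<alpha> + 2 * a) + 2 * b^2"
    and "r * ((\<alpha> + 2 * a)^2 + 4 * b^2) = \<alpha> * b"
proof -
  define c where "c = \<alpha> + 2 * a"
  have e1': "a = p * c - 2 * r * b" and e2': "b = 2 * p * b + r * c" using e1 e2 by (simp_all add: c_def)
  have "a * c = (p * c - 2 * r * b) * c" using arg_cong[OF e1', of "\<lambda>t. t * c"] .
  also have "\<dots> = p * c^2 - 2 * (r * b * c)" by (simp add: power2_eq_square algebra_simps)
  finally have h1: "a * c = p * c^2 - 2 * (r * b * c)" .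
  have "b^2 = b * (2 * p * b + r * c)" using arg_cong[OF e2', of "\<lambda>t. b * t"] by (simp add: power2_eq_square)
  also have "\<dots> = 2 * (p * b^2) + r * b * c" by (simp add: power2_eq_square algebra_simps)
  finally have h2: "b^2 = 2 * (p * b^2) + r * b * c" .
  have "p * (c^2 + 4 * b^2) = p * c^2 + 4 * (p * b^2)" by (simp add: algebra_simps)
  with h1 h2 show "p * ((\<alpha> + 2 * a)^2 + 4 * b^2) = a * (\<alpha> + 2 * a) + 2 * b^2"
    unfolding c_def[symmetric] by linarith
  have "b * c = (2 * p * b + r * c) * c" using arg_cong[OF e2', of "\<lambda>t. t * c"] .
  also have "\<dots> = 2 * (p * b * c) + r * c^2" by (simp add: power2_eq_square algebra_simps)
  finally have h3: "b * c = 2 * (p * b * c) + r * c^2" .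
  have "a * b = (p * c - 2 * r * b) * b" using arg_cong[OF e1', of "\<lambda>t. t * b"] .
  also have "\<dots> = p * b * c - 2 * (r * b^2)" by (simp add: power2_eq_square algebra_simps)
  finally have h4: "a * b = p * b * c - 2 * (r * b^2)" .
  have h5: "b * c = \<alpha> * b + 2 * (a * b)" by (simp add: c_def algebra_simps)
  have "r * (c^2 + 4 * b^2) = r * c^2 + 4 * (r * b^2)" by (simp add: algebra_simps)
  with h3 h4 h5 show "r * ((\<alpha> + 2 * a)^2 + 4 * b^2) = \<alpha> * b"
    unfolding c_def[symmetric] by linarith
qed

lemma rayleigh_relation_bounds:
  fixes \<alpha> lm rH rS a b p r :: real
  assumes \<alpha>: "\<alpha> \<ge> 0" and lm: "lm > 0" "lm \<le> a" and aH: "a \<le> rH" and bS: "\<bar>b\<bar> \<le> rS"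
    and e1: "a = p * (\<alpha> + 2 * a) - 2 * r * b" and e2: "b = 2 * p * b + r * (\<alpha> + 2 * a)"
  shows "lm * (\<alpha> + 2 * lm) / ((\<alpha> + 2 * rH)^2 + 4 * rS^2) \<le> p"
    and "p \<le> (rH * (\<alpha> + 2 * rH) + 2 * rS^2) / (\<alpha> + 2 * lm)^2"
    and "\<bar>r\<bar> \<le> \<alpha> * rS / (\<alpha> + 2 * lm)^2"
proof -
  define c where "c = \<alpha> + 2 * a"
  define D where "D = c^2 + 4 * b^2"
  have c: "\<alpha> + 2 * lm \<le> c" "\<alpha> + 2 * lm > 0" "c \<le> \<alpha> + 2 * rH" using lm aH \<alpha> by (auto simp: c_def)
  have c2: "c^2 \<le> D" "c^2 > 0" using c by (auto simp: D_def)
  have D: "D > 0" using c2 by linarith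
  have p: "p = (a * c + 2 * b^2) / D" and r: "r = \<alpha> * b / D"
    using rayleigh_relation_solution[OF e1 e2] D unfolding c_def[symmetric] D_def[symmetric]
    by (simp_all add: field_simps)
  have b2: "b^2 \<le> rS^2" using bS by (metis abs_ge_zero power2_abs power_mono)
  have cc: "(\<alpha> + 2 * lm)^2 \<le> c^2" "c^2 \<le> (\<alpha> + 2 * rH)^2"
    using c by (auto intro: power_mono)
  have "D \<le> (\<alpha> + 2 * rH)^2 + 4 * rS^2" using cc b2 unfolding D_def by simp
  moreover have "lm * (\<alpha> + 2 * lm) \<le> a * c" using lm c by (intro mult_mono) auto
  ultimately have "lm * (\<alpha> + 2 * lm) / ((\<alpha> + 2 * rH)^2 + 4 * rS^2) \<le> a * c / D"
    using lm c D by (intro frac_le) auto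
  also have "\<dots> \<le> p" unfolding p using D by (intro divide_right_mono) auto
  finally show "lm * (\<alpha> + 2 * lm) / ((\<alpha> + 2 * rH)^2 + 4 * rS^2) \<le> p" .
  have num: "0 \<le> a * c + 2 * b^2" using lm c by simp
  have "p \<le> (a * c + 2 * b^2) / c^2" unfolding p using num c2 D by (intro divide_left_mono) auto
  also have "\<dots> \<le> (rH * (\<alpha> + 2 * rH) + 2 * rS^2) / (\<alpha> + 2 * lm)^2"
    using num aH b2 cc c lm by (intro frac_le add_mono mult_mono) auto
  finally show "p \<le> (rH * (\<alpha> + 2 * rH) + 2 * rS^2) / (\<alpha> + 2 * lm)^2" .
  have "\<bar>r\<bar> = \<alpha> * \<bar>b\<bar> / D" unfolding r using \<alpha> D by (simp add: abs_mult)
  also have "\<dots> \<le> \<alpha> * \<bar>b\<bar> / c^2" using \<alpha> c2 D by (intro divide_left_mono) auto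
  also have "\<dots> \<le> \<alpha> * rS / (\<alpha> + 2 * lm)^2"
    using \<alpha> bS cc c by (intro frac_le mult_left_mono) auto
  finally show "\<bar>r\<bar> \<le> \<alpha> * rS / (\<alpha> + 2 * lm)^2" .
qed

text \<open>With \<open>q = u\<^sup>*Au\<close> and \<open>N = |u|\<^sup>2\<close>, the quotient \<open>q/N = a + \<i> b\<close> satisfies
  \<open>\<lambda>\<^sub>m\<^sub>i\<^sub>n(H) \<le> a \<le> \<rho>(H)\<close> and \<open>|b| \<le> \<rho>(S)\<close>, and \<open>q = \<lambda>(\<alpha>N + 2q)\<close> is the relation solved above.\<close>

lemma MGSSP_eig_bounds:
  fixes A :: "real mat"
  assumes pd: "pos_def_real m A" and \<alpha>: "\<alpha> \<ge> 0" and u: "\<exists>i<m. u $ i \<noteq> 0"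
    and eq: "\<And>i. i < m \<Longrightarrow> (\<Sum>j<m. complex_of_real (A $$ (i,j)) * u $ j) =
        lam * (complex_of_real \<alpha> * u $ i + 2 * (\<Sum>j<m. complex_of_real (A $$ (i,j)) * u $ j))"
  shows "eig_bounds A \<alpha> lam"
proof -
  have A: "A \<in> carrier_mat m m" using pd unfolding pos_def_real_def by auto
  obtain i0 where i0: "i0 < m" "u $ i0 \<noteq> 0" using u by blast
  then have m: "m > 0" by simp
  define q where "q = cquad_form m A u"
  define N where "N = (\<Sum>i<m. (cmod (u $ i))^2)"
  have N: "N > 0" unfolding N_def using sum_cmod_sq_pos[OF i0] .
  have N_split: "N = (\<Sum>i<m. (Re (u $ i))^2) + (\<Sum>i<m. (Im (u $ i))^2)"
    unfolding N_def by (simp add: cmod_power2 sum.distrib)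
  define a where "a = Re q / N"
  define b where "b = Im q / N"
  have rel: "q = lam * (complex_of_real (\<alpha> * N) + 2 * q)"
    unfolding q_def N_def by (rule cquad_form_eigen_relation[OF eq])
  have "N * a = N * (Re lam * (\<alpha> + 2 * a) - 2 * Im lam * b)"
    using arg_cong[OF rel, of Re] N by (simp add: a_def b_def algebra_simps)
  then have e1: "a = Re lam * (\<alpha> + 2 * a) - 2 * Im lam * b" using N by simp
  have "N * b = N * (2 * Re lam * b + Im lam * (\<alpha> + 2 * a))"
    using arg_cong[OF rel, of Im] N by (simp add: a_def b_def algebra_simps)
  then have e2: "b = 2 * Re lam * b + Im lam * (\<alpha> + 2 * a)" using N by simp
  have "lambda_min (sym_part A) * N \<le> Re q" "Re q \<le> rho (sym_part A) * N"
    using pos_def_quad_form_bounds[OF pd m, of "\<lambda>i. Re (u $ i)"]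
      pos_def_quad_form_bounds[OF pd m, of "\<lambda>i. Im (u $ i)"]
    unfolding q_def Re_cquad_form N_split by (simp_all add: distrib_left)
  then have "lambda_min (sym_part A) \<le> a" "a \<le> rho (sym_part A)"
    using N by (simp_all add: a_def field_simps)
  moreover have "\<bar>Im q\<bar> \<le> rho (skew_part A) * N"
    using skew_part_bilinear_bound[OF A m] unfolding q_def Im_cquad_form N_split .
  then have "\<bar>b\<bar> \<le> rho (skew_part A)"
    using N by (simp add: b_def abs_div field_simps)
  ultimately show ?thesis
    using rayleigh_relation_bounds[OF \<alpha> lambda_min_sym_part_pos[OF pd m] _ _ _ e1 e2]
    unfolding eig_bounds_def Let_def by blast
qed

lemma full_rank_mult_vec_eq_zero:
  fixes B :: "real mat"
  assumes B: "B \<in> carrier_mat m n" and r: "vec_space.rank m B = n"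
    and w: "w \<in> carrier_vec n" and Bw: "B *\<^sub>v w = 0\<^sub>v m"
  shows "w = 0\<^sub>v n"
proof (rule ccontr)
  assume w0: "w \<noteq> 0\<^sub>v n"
  interpret vec_space "TYPE(real)" m .
  show False
  proof (cases "distinct (cols B)")
    case True
    have "lin_indpt (set (cols B))" using full_rank_lin_indpt[OF B r True] .
    moreover have "lin_dep (set (cols B))" using lin_depI[OF B w w0 Bw True] .
    ultimately show False by simp
  next
    case False
    obtain S where S: "maximal S (\<lambda>T. T \<subseteq> set (cols B) \<and> lin_indpt T)"
      using maximal_exists[of "(\<lambda>T. T \<subseteq> set (cols B) \<and> lin_indpt T)" "card (set (cols B))" "{}"]
      by (meson List.finite_set card_mono empty_iff empty_subsetI finite_lin_indpt2 rev_finite_subset)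
    then have "card S \<le> card (set (cols B))" by (simp add: card_mono maximal_def)
    then have "card S < n"
      using B cols_length card_length False card_distinct carrier_matD(2) nat_less_le
      by (metis dual_order.antisym dual_order.trans)
    then show False using rank_card_indpt[OF B S] r by simp
  qed
qed

lemma full_rank_of_real_mult_eq_zero:
  fixes B :: "real mat" and v :: "complex vec"
  assumes B: "B \<in> carrier_mat m n" and r: "vec_space.rank m B = n" and v: "v \<in> carrier_vec n"
    and Bv: "\<And>i. i < m \<Longrightarrow> (\<Sum>k<n. complex_of_real (B $$ (i,k)) * v $ k) = 0"
  shows "v = 0\<^sub>v n"
proof -
  have B_vec: "(B *\<^sub>v vec n f) $ i = (\<Sum>k<n. B $$ (i,k) * f k)" if "i < m" for i f
    using B that by (auto simp: mult_mat_vec_def scalar_prod_def atLeast0LessThan intro!: sum.cong)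
  have "B *\<^sub>v vec n (\<lambda>k. Re (v $ k)) = 0\<^sub>v m" "B *\<^sub>v vec n (\<lambda>k. Im (v $ k)) = 0\<^sub>v m"
    using B arg_cong[where f=Re, OF Bv] arg_cong[where f=Im, OF Bv]
    by (auto intro!: eq_vecI simp del: index_mult_mat_vec simp: B_vec Re_sum Im_sum)
  then have "vec n (\<lambda>k. Re (v $ k)) = 0\<^sub>v n" "vec n (\<lambda>k. Im (v $ k)) = 0\<^sub>v n"
    using full_rank_mult_vec_eq_zero[OF B r] by auto
  then have "Re (v $ k) = 0" "Im (v $ k) = 0" if "k < n" for k
    using that by (metis index_vec index_zero_vec(1))+
  then show ?thesis
    using v by (intro eq_vecI) (auto simp: complex_eq_iff)
qed

text \<open>For \<open>\<lambda> = 0\<close> the first block row reads \<open>Au + Bv = 0\<close>; testing it against \<open>u\<close> and using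
  \<open>B\<^sup>Tu = 0\<close> gives \<open>u\<^sup>*Au = 0\<close>, hence \<open>u = 0\<close>, then \<open>Bv = 0\<close> and \<open>v = 0\<close> by full column rank.\<close>

lemma MGSSP_eigenvalue_nonzero:
  fixes A B :: "real mat"
  assumes pd: "pos_def_real m A" and B: "B \<in> carrier_mat m n" and r: "vec_space.rank m B = n"
    and v: "v \<in> carrier_vec n"
    and nz: "(\<exists>i<m. u $ i \<noteq> 0) \<or> (\<exists>k<n. v $ k \<noteq> 0)"
    and BTu: "\<And>k. k < n \<Longrightarrow> (\<Sum>i<m. complex_of_real (B $$ (i,k)) * u $ i) = 0"
    and eq: "\<And>i. i < m \<Longrightarrow>
      (\<Sum>j<m. complex_of_real (A $$ (i,j)) * u $ j) + (\<Sum>k<n. complex_of_real (B $$ (i,k)) * v $ k) = 0"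
  shows False
proof -
  have "0 = (\<Sum>i<m. cnj (u $ i) * ((\<Sum>j<m. complex_of_real (A $$ (i,j)) * u $ j)
      + (\<Sum>k<n. complex_of_real (B $$ (i,k)) * v $ k)))"
    using eq by simp
  also have "\<dots> = cquad_form m A u + (\<Sum>k<n. v $ k * cnj (\<Sum>i<m. complex_of_real (B $$ (i,k)) * u $ i))"
    unfolding cquad_form_def sum_cnj_mult_real_mat[symmetric] by (simp add: distrib_left sum.distrib)
  also have "\<dots> = cquad_form m A u" using BTu by simp
  finally have "\<forall>i<m. u $ i = 0"
    using pos_def_Re_cquad_form_pos[OF pd, of u] by force
  then have "v = 0\<^sub>v n"
    using eq by (intro full_rank_of_real_mult_eq_zero[OF B r v]) simp
  with \<open>\<forall>i<m. u $ i = 0\<close> nz show False by auto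
qed

theorem theorem5p1:
  fixes m n :: nat and A B :: "real mat" and \<alpha> \<beta> :: real
    and lam :: complex and u v :: "complex vec"
  assumes "n \<le> m"
    and "pos_def_real m A"
    and "B \<in> carrier_mat m n"
    and "\<alpha> \<ge> 0" and "\<beta> > 0"
    and "u \<in> carrier_vec m" and "v \<in> carrier_vec n"
    and "eigenvector
           (the (mat_inverse (map_mat complex_of_real (P_MGSSP \<alpha> \<beta> A B)))
              * map_mat complex_of_real (saddle_mat A B))
           (u @\<^sub>v v) lam"
  shows "(vec_space.rank m B = n \<and> transpose_mat (map_mat complex_of_real B) *\<^sub>v u = 0\<^sub>v n
            \<longrightarrow> eig_bounds A \<alpha> lam)
       \<and> (vec_space.rank m B < n \<and> u = 0\<^sub>v m \<longrightarrow> lam = 0)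
       \<and> (vec_space.rank m B < n \<and> transpose_mat (map_mat complex_of_real B) *\<^sub>v u = 0\<^sub>v n
            \<longrightarrow> lam = 0 \<or> eig_bounds A \<alpha> lam)"
proof -
  note pd = assms(2) and B = assms(3) and \<alpha> = assms(4) and \<beta> = assms(5) and u = assms(6) and v = assms(7)
  note nz = MGSSP_eigen_equations(1)[OF pd B \<alpha> \<beta> u v assms(8)]
    and row1 = MGSSP_eigen_equations(2)[OF pd B \<alpha> \<beta> u v assms(8)]
    and row2 = MGSSP_eigen_equations(3)[OF pd B \<alpha> \<beta> u v assms(8)]
  have BTu: "\<And>k. k < n \<Longrightarrow> (\<Sum>i<m. complex_of_real (B $$ (i,k)) * u $ i) = 0"
    if "transpose_mat (map_mat complex_of_real B) *\<^sub>v u = 0\<^sub>v n"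
    using that of_real_transpose_mult_vec_index[OF B u] by (metis index_zero_vec(1))
  have bounds: "eig_bounds A \<alpha> lam"
    if BTu: "\<And>k. k < n \<Longrightarrow> (\<Sum>i<m. complex_of_real (B $$ (i,k)) * u $ i) = 0" and "lam \<noteq> 0"
  proof -
    have v0: "\<forall>k<n. v $ k = 0" using row2 BTu \<open>lam \<noteq> 0\<close> \<beta> by force
    then have "\<exists>i<m. u $ i \<noteq> 0" using nz by blast
    moreover have "\<And>i. i < m \<Longrightarrow> (\<Sum>j<m. complex_of_real (A $$ (i,j)) * u $ j) =
        lam * (complex_of_real \<alpha> * u $ i + 2 * (\<Sum>j<m. complex_of_real (A $$ (i,j)) * u $ j))"
      using row1 v0 by simp
    ultimately show ?thesis by (rule MGSSP_eig_bounds[OF pd \<alpha>])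
  qed
  have "lam = 0" if "u = 0\<^sub>v m"
    using nz row2 that \<beta> by force
  moreover have "lam \<noteq> 0" if "vec_space.rank m B = n"
    "\<And>k. k < n \<Longrightarrow> (\<Sum>i<m. complex_of_real (B $$ (i,k)) * u $ i) = 0"
    using MGSSP_eigenvalue_nonzero[OF pd B that(1) v nz that(2)] row1 by force
  ultimately show ?thesis using bounds BTu by blast
qed

end
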